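(* Let $n,k,m,r$ be positive integers. Then \begin{align*} r\,S_{\leq m}(n,k,r)&=\sum_{j=1}^{\min(m,\,n+2-k-r)}\binom{n}{j}S_{\leq m}(n-j,k,r-1),\\ n\,S_{\leq m}(n,k,r)&=\sum_{j=1}^{\min(m,\,n+2-k-r)}j\binom{n}{j}\Big[S_{\leq m}(n-j,k,r-1)+(k-1)S_{\leq m}(n-j,k-1,r)\Big], \end{align*} where the term $(k-1)S_{\leq m}(n-j,k-1,r)$ is $0$ when $k=1$.
   Context: For integers $N\ge 0$, $k\ge1$, $r\ge 0$, $m\ge1$, $S_{\leq m}(N,k,r)$ is the number of ways to partition $[N]=\{1,\dots,N\}$ into $r+k-1$ non-empty blocks, each of size at most $m$, where $r$ of the blocks receive the label $1$ (blocks with label $1$ are indistinguishable among themselves) and the remaining $k-1$ blocks receive the distinct labels $2,3,\dots,k$. *)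

theory Defs
  imports Main "HOL-Library.Disjoint_Sets" "HOL-Library.FuncSet"
begin

definition labelled_partitions :: "nat \<Rightarrow> nat \<Rightarrow> nat \<Rightarrow> nat \<Rightarrow> (nat set set \<times> (nat set \<Rightarrow> nat)) set" where
  "labelled_partitions m N k r =
     {(P, g). partition_on {1..N} P \<and> card P = r + k - 1 \<and> (\<forall>B\<in>P. card B \<le> m)
        \<and> g \<in> P \<rightarrow>\<^sub>E {1..k}
        \<and> card {B\<in>P. g B = 1} = r
        \<and> bij_betw g {B\<in>P. g B \<noteq> 1} {2..k}}"

definition S_le :: "nat \<Rightarrow> nat \<Rightarrow> nat \<Rightarrow> nat \<Rightarrow> nat" where
  "S_le m N k r = card (labelled_partitions m N k r)"

end

(* Ordering the r indistinguishable blocks with label 1 shows that r! S_{<=m}(N,k,r) is the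
   number T(N, r+k-1) of ordered partitions of an N-set into r+k-1 blocks of size at most m;
   this is proved by double counting: removing a block with label 1, or the block with the
   largest label k, leaves a labelled partition of the remaining elements.  The numbers T obey
   the first-block recursion T(n, b+1) = sum_j C(n,j) T(n-j, b), which is the first identity
   after division by (r-1)!, and the weighted recursion
   n T(n, b+1) = (b+1) sum_j j C(n,j) T(n-j, b), which gives the second identity once the factor
   b+1 = r + (k-1) is split between its two terms.  The summands with n - j < b vanish, whence
   the upper summation limit. *)

theory Submission
  imports Defs
begin

section \<open>Ordered partitions with bounded blocks\<close>

text \<open>\<open>T_le m n b\<close> is the number of sequences of \<open>b\<close> nonempty pairwise disjoint blocks of size at
  most \<open>m\<close> covering an \<open>n\<close>-element set; the recursion chooses the first block.\<close>

fun T_le :: "nat \<Rightarrow> nat \<Rightarrow> nat \<Rightarrow> nat" where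
  "T_le m n 0 = (if n = 0 then 1 else 0)"
| "T_le m n (Suc b) = (\<Sum>j = 1..m. (n choose j) * T_le m (n - j) b)"

lemma T_le_eq_0: "n < b \<Longrightarrow> T_le m n b = 0"
proof (induction b arbitrary: n)
  case (Suc b)
  have "(n choose j) * T_le m (n - j) b = 0" if "1 \<le> j" for j
    using Suc that by (cases "j \<le> n") auto
  then show ?case by simp
qed simp

lemma sum_choose_T_le_truncate:
  "(\<Sum>j = 1..m. f j * ((n choose j) * T_le m (n - j) b)) =
   (\<Sum>j = 1..min m (n - b). f j * ((n choose j) * T_le m (n - j) b))"
proof (rule sum.mono_neutral_right)
  show "\<forall>j \<in> {1..m} - {1..min m (n - b)}. f j * ((n choose j) * T_le m (n - j) b) = 0"
  proof
    fix j assume j: "j \<in> {1..m} - {1..min m (n - b)}"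
    show "f j * ((n choose j) * T_le m (n - j) b) = 0"
    proof (cases "j \<le> n")
      case True
      with j have "n - j < b" by auto
      then show ?thesis by (simp add: T_le_eq_0)
    qed simp
  qed
qed auto

lemma choose_mult_choose_diff_commute:
  "(n choose j) * ((n - j) choose i) = (n choose i) * ((n - i) choose j)" for n i j :: nat
proof (cases "i + j \<le> n")
  case True
  have "(n choose j) * ((n - j) choose i) = (n choose (i + j)) * ((i + j) choose j)"
    using choose_mult[of j "i + j" n] True by simp
  also have "\<dots> = (n choose (i + j)) * ((i + j) choose i)"
    using binomial_symmetric[of j "i + j"] by simp
  also have "\<dots> = (n choose i) * ((n - i) choose j)"
    using choose_mult[of i "i + j" n] True by simp
  finally show ?thesis .
next
  case False
  have "(n choose j) * ((n - j) choose i) = 0"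
    by (cases "j \<le> n") (use False in auto)
  moreover have "(n choose i) * ((n - i) choose j) = 0"
    by (cases "i \<le> n") (use False in auto)
  ultimately show ?thesis by (simp only:)
qed

text \<open>Combinatorially: the size of the first block, summed over all ordered partitions into
  \<open>Suc b\<close> blocks, is by symmetry the fraction \<open>1 / Suc b\<close> of their total size \<open>n * T_le m n (Suc b)\<close>.
  The induction below avoids the symmetry argument by splitting \<open>n = j + (n - j)\<close> at the
  first block.\<close>

lemma T_le_Suc_weighted:
  "n * T_le m n (Suc b) = Suc b * (\<Sum>j = 1..m. j * (n choose j) * T_le m (n - j) b)"
proof (induction b arbitrary: n)
  case 0
  have "n * ((n choose j) * T_le m (n - j) 0) = j * (n choose j) * T_le m (n - j) 0" for j
    by (cases "j \<le> n") auto
  then show ?case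
    by (simp only: T_le.simps(2) sum_distrib_left) simp
next
  case (Suc b)
  define W where "W = (\<Sum>i = 1..m. i * (n choose i) * T_le m (n - i) (Suc b))"
  have split_n: "n * ((n choose j) * T_le m (n - j) (Suc b)) =
      j * (n choose j) * T_le m (n - j) (Suc b) + (n choose j) * ((n - j) * T_le m (n - j) (Suc b))" for j
  proof (cases "j \<le> n")
    case True
    then have "n = j + (n - j)" by simp
    then show ?thesis by (metis add_mult_distrib mult.assoc mult.left_commute)
  qed simp
  have "n * T_le m n (Suc (Suc b)) = (\<Sum>j = 1..m. n * ((n choose j) * T_le m (n - j) (Suc b)))"
    by (simp add: sum_distrib_left)
  also have "\<dots> = W + (\<Sum>j = 1..m. (n choose j) * ((n - j) * T_le m (n - j) (Suc b)))"
    unfolding W_def split_n by (simp add: sum.distrib)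
  also have "(\<Sum>j = 1..m. (n choose j) * ((n - j) * T_le m (n - j) (Suc b)))
      = Suc b * (\<Sum>j = 1..m. \<Sum>i = 1..m. i * ((n choose j) * ((n - j) choose i)) * T_le m (n - j - i) b)"
    by (simp only: Suc.IH sum_distrib_left mult_ac)
  also have "(\<Sum>j = 1..m. \<Sum>i = 1..m. i * ((n choose j) * ((n - j) choose i)) * T_le m (n - j - i) b)
      = (\<Sum>i = 1..m. \<Sum>j = 1..m. i * ((n choose i) * ((n - i) choose j)) * T_le m (n - i - j) b)"
    by (subst sum.swap)
      (simp only: choose_mult_choose_diff_commute[of n] diff_commute[of n])
  also have "\<dots> = W"
    unfolding W_def by (simp add: sum_distrib_left mult_ac)
  finally show ?case by (simp only: W_def mult_Suc)
qed

section \<open>Labelled partitions of a finite set\<close>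

definition labelled_partitions_on ::
    "nat \<Rightarrow> 'a set \<Rightarrow> nat \<Rightarrow> nat \<Rightarrow> ('a set set \<times> ('a set \<Rightarrow> nat)) set" where
  "labelled_partitions_on m A k r =
     {(P, g). partition_on A P \<and> card P = r + k - 1 \<and> (\<forall>B\<in>P. card B \<le> m)
        \<and> g \<in> P \<rightarrow>\<^sub>E {1..k}
        \<and> card {B\<in>P. g B = 1} = r
        \<and> bij_betw g {B\<in>P. g B \<noteq> 1} {2..k}}"

lemma labelled_partitions_eq_on: "labelled_partitions m N k r = labelled_partitions_on m {1..N} k r"
  by (simp add: labelled_partitions_def labelled_partitions_on_def)

lemma labelled_partitions_onD:
  "(P, g) \<in> labelled_partitions_on m A k r \<Longrightarrow>
     partition_on A P \<and> (\<forall>B\<in>P. card B \<le> m) \<and> g \<in> extensional P"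
  by (simp add: labelled_partitions_on_def PiE_iff)

lemma finite_labelled_partitions_on:
  assumes "finite A"
  shows "finite (labelled_partitions_on m A k r)"
proof (rule finite_subset)
  show "labelled_partitions_on m A k r \<subseteq> (SIGMA P:{P. partition_on A P}. P \<rightarrow>\<^sub>E {1..k})"
    by (auto simp: labelled_partitions_on_def)
  show "finite (SIGMA P:{P. partition_on A P}. P \<rightarrow>\<^sub>E {1..k})"
    using assms finitely_many_partition_on finite_elements by (intro finite_SigmaI finite_PiE) auto
qed

definition bounded_blocks :: "nat \<Rightarrow> 'a set \<Rightarrow> 'a set set" where
  "bounded_blocks m A = {B. B \<subseteq> A \<and> B \<noteq> {} \<and> card B \<le> m}"

lemma finite_bounded_blocks: "finite A \<Longrightarrow> finite (bounded_blocks m A)"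
  unfolding bounded_blocks_def by (rule finite_subset[of _ "Pow A"]) auto

lemma sum_bounded_blocks:
  assumes "finite A"
  shows "(\<Sum>B\<in>bounded_blocks m A. f (card (A - B))) = (\<Sum>j = 1..m. (card A choose j) * f (card A - j))"
proof -
  have blocks: "bounded_blocks m A = (\<Union>j\<in>{1..m}. {B. B \<subseteq> A \<and> card B = j})"
    using assms by (auto simp: bounded_blocks_def finite_subset Suc_le_eq card_gt_0_iff)
  have "(\<Sum>B\<in>bounded_blocks m A. f (card (A - B)))
      = (\<Sum>j = 1..m. \<Sum>B\<in>{B. B \<subseteq> A \<and> card B = j}. f (card (A - B)))"
    unfolding blocks using assms by (intro sum.UNION_disjoint) (auto intro: finite_subset)
  also have "\<dots> = (\<Sum>j = 1..m. \<Sum>B\<in>{B. B \<subseteq> A \<and> card B = j}. f (card A - j))"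
    using assms by (intro sum.cong refl) (auto simp: card_Diff_subset finite_subset)
  also have "\<dots> = (\<Sum>j = 1..m. (card A choose j) * f (card A - j))"
    by (simp add: n_subsets[OF assms])
  finally show ?thesis .
qed

lemma sum_bounded_blocks_T_le:
  "finite A \<Longrightarrow> (\<Sum>B\<in>bounded_blocks m A. T_le m (card (A - B)) b) = T_le m (card A) (Suc b)"
  using sum_bounded_blocks[of A "\<lambda>n. T_le m n b" m] by simp

lemma partition_on_Diff_block:
  assumes "partition_on A P" "B \<in> P"
  shows "partition_on (A - B) (P - {B})"
proof -
  have "disjnt B (\<Union>(P - {B}))"
    using partition_onD2[OF assms(1)] assms(2) by (auto simp: disjnt_def disjoint_def)
  moreover have "partition_on A (insert B (P - {B}))"
    using assms by (simp add: insert_absorb)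
  ultimately show ?thesis using partition_on_insert by blast
qed

lemma partition_on_insert_block:
  assumes "partition_on (A - B) Q" "B \<subseteq> A" "B \<noteq> {}"
  shows "partition_on A (insert B Q)" "B \<notin> Q"
proof -
  have "\<Union>Q = A - B" using partition_onD1[OF assms(1)] by simp
  then show "partition_on A (insert B Q)" "B \<notin> Q"
    using assms by (auto simp: partition_on_insert disjnt_def)
qed

lemma labelled_partitions_on_remove_unlabelled:
  assumes x: "(P, g) \<in> labelled_partitions_on m A k (Suc r)" and B: "B \<in> P" "g B = 1"
    and "finite A"
  shows "(P - {B}, restrict g (P - {B})) \<in> labelled_partitions_on m (A - B) k r"
proof -
  have part: "partition_on A P" and cardP: "card P = Suc r + k - 1"
    and small: "\<forall>C\<in>P. card C \<le> m" and g: "g \<in> P \<rightarrow>\<^sub>E {1..k}"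
    and unl: "card {C\<in>P. g C = 1} = Suc r" and bij: "bij_betw g {C\<in>P. g C \<noteq> 1} {2..k}"
    using x by (simp_all add: labelled_partitions_on_def)
  have "finite P" using finite_elements[OF \<open>finite A\<close> part] .
  have "{C \<in> P - {B}. restrict g (P - {B}) C = 1} = {C\<in>P. g C = 1} - {B}"
    by auto
  moreover have "card ({C\<in>P. g C = 1} - {B}) = r"
    using unl B \<open>finite P\<close> by simp
  moreover have "{C \<in> P - {B}. restrict g (P - {B}) C \<noteq> 1} = {C\<in>P. g C \<noteq> 1}"
    using B by auto
  moreover have "bij_betw (restrict g (P - {B})) {C\<in>P. g C \<noteq> 1} {2..k}"
    using bij B by (subst bij_betw_cong[where g = g]) auto
  moreover have "restrict g (P - {B}) \<in> (P - {B}) \<rightarrow>\<^sub>E {1..k}"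
    using g by (auto simp: PiE_iff)
  ultimately show ?thesis
    using partition_on_Diff_block[OF part B(1)] cardP small \<open>finite P\<close> B(1)
    by (simp add: labelled_partitions_on_def)
qed

lemma labelled_partitions_on_insert_unlabelled:
  assumes y: "(Q, h) \<in> labelled_partitions_on m (A - B) k r" and B: "B \<in> bounded_blocks m A"
    and "1 \<le> k" "finite A"
  shows "(insert B Q, h(B := 1)) \<in> labelled_partitions_on m A k (Suc r)"
proof -
  have part: "partition_on (A - B) Q" and cardQ: "card Q = r + k - 1"
    and small: "\<forall>C\<in>Q. card C \<le> m" and h: "h \<in> Q \<rightarrow>\<^sub>E {1..k}"
    and unl: "card {C\<in>Q. h C = 1} = r" and bij: "bij_betw h {C\<in>Q. h C \<noteq> 1} {2..k}"
    using y by (simp_all add: labelled_partitions_on_def)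
  have "finite Q" using finite_elements[OF _ part] \<open>finite A\<close> by simp
  have "partition_on A (insert B Q)" "B \<notin> Q"
    using partition_on_insert_block[OF part] B by (auto simp: bounded_blocks_def)
  moreover have "{C \<in> insert B Q. (h(B := 1)) C = 1} = insert B {C\<in>Q. h C = 1}"
    by auto
  moreover have "{C \<in> insert B Q. (h(B := 1)) C \<noteq> 1} = {C\<in>Q. h C \<noteq> 1}"
    using \<open>B \<notin> Q\<close> by auto
  moreover have "bij_betw (h(B := 1)) {C\<in>Q. h C \<noteq> 1} {2..k}"
    using bij \<open>B \<notin> Q\<close> by (subst bij_betw_cong[where g = h]) auto
  moreover have "h(B := 1) \<in> insert B Q \<rightarrow>\<^sub>E {1..k}"
    using h \<open>1 \<le> k\<close> by (auto simp: PiE_def extensional_def)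
  ultimately show ?thesis
    using cardQ small unl B \<open>finite Q\<close> \<open>1 \<le> k\<close>
    by (simp add: labelled_partitions_on_def bounded_blocks_def)
qed

lemma bij_betw_Diff_max:
  assumes "bij_betw g S {a..Suc k}" "B \<in> S" "g B = Suc k"
  shows "bij_betw g (S - {B}) {a..k}"
proof -
  have "bij_betw g (S - {B}) ({a..Suc k} - {Suc k})"
    using assms bij_betw_apply[OF assms(1,2)] by (intro bij_betw_DiffI) auto
  moreover have "{a..Suc k} - {Suc k} = {a..k}" by auto
  ultimately show ?thesis by simp
qed

lemma bij_betw_fun_upd_insert_max:
  assumes "bij_betw h S {a..k}" "B \<notin> S" "a \<le> Suc k"
  shows "bij_betw (h(B := Suc k)) (insert B S) {a..Suc k}"
proof -
  have "bij_betw (h(B := Suc k)) S {a..k}"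
    using assms(1,2) by (subst bij_betw_cong[where g = h]) auto
  then have "bij_betw (h(B := Suc k)) (S \<union> {B}) ({a..k} \<union> {Suc k})"
    using notIn_Un_bij_betw3[of B S "h(B := Suc k)" "{a..k}"] assms(2) by simp
  moreover have "{a..k} \<union> {Suc k} = {a..Suc k}" using assms(3) by auto
  ultimately show ?thesis by simp
qed

lemma labelled_partitions_on_remove_top:
  assumes x: "(P, g) \<in> labelled_partitions_on m A (Suc k) r" and B: "B \<in> P" "g B = Suc k"
    and "1 \<le> k" "finite A"
  shows "(P - {B}, restrict g (P - {B})) \<in> labelled_partitions_on m (A - B) k r"
proof -
  have part: "partition_on A P" and cardP: "card P = r + Suc k - 1"
    and small: "\<forall>C\<in>P. card C \<le> m" and unl: "card {C\<in>P. g C = 1} = r"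
    and bij: "bij_betw g {C\<in>P. g C \<noteq> 1} {2..Suc k}"
    using x by (simp_all add: labelled_partitions_on_def)
  have "finite P" using finite_elements[OF \<open>finite A\<close> part] .
  have bij': "bij_betw g ({C\<in>P. g C \<noteq> 1} - {B}) {2..k}"
    using bij_betw_Diff_max[OF bij] B \<open>1 \<le> k\<close> by simp
  have "{C \<in> P - {B}. restrict g (P - {B}) C = 1} = {C\<in>P. g C = 1}"
    using B \<open>1 \<le> k\<close> by auto
  moreover have "{C \<in> P - {B}. restrict g (P - {B}) C \<noteq> 1} = {C\<in>P. g C \<noteq> 1} - {B}"
    by auto
  moreover have "bij_betw (restrict g (P - {B})) ({C\<in>P. g C \<noteq> 1} - {B}) {2..k}"
    using bij' by (subst bij_betw_cong[where g = g]) auto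
  moreover have "restrict g (P - {B}) \<in> (P - {B}) \<rightarrow>\<^sub>E {1..k}"
  proof -
    have "g C \<in> {1..k}" if "C \<in> P - {B}" for C
    proof (cases "g C = 1")
      case False
      with that show ?thesis using bij_betw_apply[OF bij', of C] by auto
    qed (use \<open>1 \<le> k\<close> in simp)
    then show ?thesis by (simp add: restrict_PiE_iff)
  qed
  ultimately show ?thesis
    using partition_on_Diff_block[OF part B(1)] cardP small unl \<open>finite P\<close> B(1) \<open>1 \<le> k\<close>
    by (simp add: labelled_partitions_on_def)
qed

lemma labelled_partitions_on_insert_top:
  assumes y: "(Q, h) \<in> labelled_partitions_on m (A - B) k r" and B: "B \<in> bounded_blocks m A"
    and "1 \<le> k" "finite A"
  shows "(insert B Q, h(B := Suc k)) \<in> labelled_partitions_on m A (Suc k) r"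
proof -
  have part: "partition_on (A - B) Q" and cardQ: "card Q = r + k - 1"
    and small: "\<forall>C\<in>Q. card C \<le> m" and h: "h \<in> Q \<rightarrow>\<^sub>E {1..k}"
    and unl: "card {C\<in>Q. h C = 1} = r" and bij: "bij_betw h {C\<in>Q. h C \<noteq> 1} {2..k}"
    using y by (simp_all add: labelled_partitions_on_def)
  have "finite Q" using finite_elements[OF _ part] \<open>finite A\<close> by simp
  have "partition_on A (insert B Q)" "B \<notin> Q"
    using partition_on_insert_block[OF part] B by (auto simp: bounded_blocks_def)
  moreover have "{C \<in> insert B Q. (h(B := Suc k)) C = 1} = {C\<in>Q. h C = 1}"
    using \<open>B \<notin> Q\<close> \<open>1 \<le> k\<close> by auto
  moreover have "{C \<in> insert B Q. (h(B := Suc k)) C \<noteq> 1} = insert B {C\<in>Q. h C \<noteq> 1}"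
    using \<open>B \<notin> Q\<close> \<open>1 \<le> k\<close> by auto
  moreover have "bij_betw (h(B := Suc k)) (insert B {C\<in>Q. h C \<noteq> 1}) {2..Suc k}"
    using bij_betw_fun_upd_insert_max[OF bij] \<open>B \<notin> Q\<close> \<open>1 \<le> k\<close> by simp
  moreover have "h(B := Suc k) \<in> insert B Q \<rightarrow>\<^sub>E {1..Suc k}"
  proof -
    have "h C \<in> {1..Suc k}" if "C \<in> Q" for C
      using PiE_mem[OF h that] by auto
    then show ?thesis using h by (auto simp: PiE_iff extensional_def)
  qed
  ultimately show ?thesis
    using cardQ small unl B \<open>finite Q\<close> \<open>1 \<le> k\<close>
    by (simp add: labelled_partitions_on_def bounded_blocks_def)
qed

lemma bij_betw_remove_marked_block:
  fixes L :: "('a set set \<times> ('a set \<Rightarrow> 'b)) set"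
    and L' :: "'a set \<Rightarrow> ('a set set \<times> ('a set \<Rightarrow> 'b)) set"
  assumes L: "\<And>P g. (P, g) \<in> L \<Longrightarrow> partition_on A P \<and> (\<forall>B\<in>P. card B \<le> m) \<and> g \<in> extensional P"
    and L': "\<And>B Q h. B \<in> bounded_blocks m A \<Longrightarrow> (Q, h) \<in> L' B \<Longrightarrow>
               partition_on (A - B) Q \<and> h \<in> extensional Q"
    and remove: "\<And>P g B. (P, g) \<in> L \<Longrightarrow> B \<in> P \<Longrightarrow> g B = c \<Longrightarrow>
               (P - {B}, restrict g (P - {B})) \<in> L' B"
    and insert: "\<And>B Q h. B \<in> bounded_blocks m A \<Longrightarrow> (Q, h) \<in> L' B \<Longrightarrow>
               (insert B Q, h(B := c)) \<in> L"
  shows "bij_betw (\<lambda>((P, g), B). (B, (P - {B}, restrict g (P - {B}))))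
           (SIGMA x:L. {B \<in> fst x. snd x B = c}) (SIGMA B:bounded_blocks m A. L' B)"
    (is "bij_betw ?F ?X ?Y")
proof (rule bij_betw_byWitness[where f' = "\<lambda>(B, (Q, h)). ((insert B Q, h(B := c)), B)"])
  show "\<forall>x\<in>?X. (\<lambda>(B, (Q, h)). ((insert B Q, h(B := c)), B)) (?F x) = x"
  proof
    fix x assume "x \<in> ?X"
    then obtain P g B where x: "x = ((P, g), B)" "(P, g) \<in> L" "B \<in> P" "g B = c"
      by auto
    with L[of P g] show "(\<lambda>(B, (Q, h)). ((insert B Q, h(B := c)), B)) (?F x) = x"
      by (auto simp: extensional_def fun_eq_iff)
  qed
  show "\<forall>y\<in>?Y. ?F ((\<lambda>(B, (Q, h)). ((insert B Q, h(B := c)), B)) y) = y"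
  proof
    fix y assume "y \<in> ?Y"
    then obtain B Q h where y: "y = (B, (Q, h))" "B \<in> bounded_blocks m A" "(Q, h) \<in> L' B"
      by auto
    with L' have "partition_on (A - B) Q" "h \<in> extensional Q" by blast+
    moreover have "B \<notin> Q"
      using partition_on_insert_block(2)[OF \<open>partition_on (A - B) Q\<close>] y(2)
      by (auto simp: bounded_blocks_def)
    ultimately show "?F ((\<lambda>(B, (Q, h)). ((insert B Q, h(B := c)), B)) y) = y"
      using y(1) by (auto simp: extensional_def fun_eq_iff)
  qed
  show "?F ` ?X \<subseteq> ?Y"
  proof
    fix y assume "y \<in> ?F ` ?X"
    then obtain P g B where "y = ?F ((P, g), B)" "(P, g) \<in> L" "B \<in> P" "g B = c"
      by auto
    with L[of P g] remove show "y \<in> ?Y"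
      using partition_onD1 partition_onD3 by (fastforce simp: bounded_blocks_def)
  qed
  show "(\<lambda>(B, (Q, h)). ((insert B Q, h(B := c)), B)) ` ?Y \<subseteq> ?X"
    using insert by auto
qed

lemma card_marked_blocks:
  fixes L :: "('a set set \<times> ('a set \<Rightarrow> 'b)) set"
    and L' :: "'a set \<Rightarrow> ('a set set \<times> ('a set \<Rightarrow> 'b)) set"
  assumes "\<And>P g. (P, g) \<in> L \<Longrightarrow> partition_on A P \<and> (\<forall>B\<in>P. card B \<le> m) \<and> g \<in> extensional P"
    and "\<And>B Q h. B \<in> bounded_blocks m A \<Longrightarrow> (Q, h) \<in> L' B \<Longrightarrow>
           partition_on (A - B) Q \<and> h \<in> extensional Q"
    and "\<And>P g B. (P, g) \<in> L \<Longrightarrow> B \<in> P \<Longrightarrow> g B = c \<Longrightarrow>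
           (P - {B}, restrict g (P - {B})) \<in> L' B"
    and "\<And>B Q h. B \<in> bounded_blocks m A \<Longrightarrow> (Q, h) \<in> L' B \<Longrightarrow>
           (insert B Q, h(B := c)) \<in> L"
    and finite_L': "\<And>B. B \<in> bounded_blocks m A \<Longrightarrow> finite (L' B)"
    and "finite A"
  shows "card (SIGMA x:L. {B \<in> fst x. snd x B = c}) = (\<Sum>B\<in>bounded_blocks m A. card (L' B))"
proof -
  have "card (SIGMA x:L. {B \<in> fst x. snd x B = c}) = card (SIGMA B:bounded_blocks m A. L' B)"
    using bij_betw_remove_marked_block[OF assms(1-4)] by (rule bij_betw_same_card)
  also have "\<dots> = (\<Sum>B\<in>bounded_blocks m A. card (L' B))"
    using finite_bounded_blocks[OF \<open>finite A\<close>] finite_L' by (simp add: card_SigmaI)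
  finally show ?thesis .
qed

lemma card_labelled_partitions_on_unlabelled_rec:
  assumes "finite A" "1 \<le> k"
  shows "Suc r * card (labelled_partitions_on m A k (Suc r)) =
         (\<Sum>B\<in>bounded_blocks m A. card (labelled_partitions_on m (A - B) k r))"
proof -
  let ?L = "labelled_partitions_on m A k (Suc r)"
  have fibres: "finite {B \<in> fst x. snd x B = 1} \<and> card {B \<in> fst x. snd x B = 1} = Suc r"
    if "x \<in> ?L" for x
    using that finite_elements[OF \<open>finite A\<close>] by (auto simp: labelled_partitions_on_def)
  have "Suc r * card ?L = card (SIGMA x:?L. {B \<in> fst x. snd x B = 1})"
    using fibres finite_labelled_partitions_on[OF \<open>finite A\<close>] by (simp add: card_SigmaI)
  also have "\<dots> = (\<Sum>B\<in>bounded_blocks m A. card (labelled_partitions_on m (A - B) k r))"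
  proof (rule card_marked_blocks)
    show "finite (labelled_partitions_on m (A - B) k r)" for B
      using \<open>finite A\<close> by (simp add: finite_labelled_partitions_on)
    show "(P - {B}, restrict g (P - {B})) \<in> labelled_partitions_on m (A - B) k r"
      if "(P, g) \<in> ?L" "B \<in> P" "g B = 1" for P g B
      using labelled_partitions_on_remove_unlabelled that \<open>finite A\<close> by blast
    show "(insert B Q, h(B := 1)) \<in> ?L"
      if "B \<in> bounded_blocks m A" "(Q, h) \<in> labelled_partitions_on m (A - B) k r" for B Q h
      using labelled_partitions_on_insert_unlabelled that assms by blast
  qed (use \<open>finite A\<close> labelled_partitions_onD in blast)+
  finally show ?thesis .
qed

lemma card_labelled_partitions_on_top_rec:
  assumes "finite A" "1 \<le> k"
  shows "card (labelled_partitions_on m A (Suc k) r) =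
         (\<Sum>B\<in>bounded_blocks m A. card (labelled_partitions_on m (A - B) k r))"
proof -
  let ?L = "labelled_partitions_on m A (Suc k) r"
  have fibres: "finite {B \<in> fst x. snd x B = Suc k} \<and> card {B \<in> fst x. snd x B = Suc k} = 1"
    if "x \<in> ?L" for x
  proof -
    obtain P g where x: "x = (P, g)" by fastforce
    with that have bij: "bij_betw g {C \<in> P. g C \<noteq> 1} {2..Suc k}"
      by (simp add: labelled_partitions_on_def)
    have "Suc k \<in> g ` {C \<in> P. g C \<noteq> 1}"
      using bij \<open>1 \<le> k\<close> by (simp add: bij_betw_def)
    then obtain B0 where B0: "B0 \<in> P" "g B0 \<noteq> 1" "g B0 = Suc k" by auto
    have "{B \<in> P. g B = Suc k} = {B0}"
    proof (intro equalityI subsetI)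
      fix B assume "B \<in> {B \<in> P. g B = Suc k}"
      then show "B \<in> {B0}"
        using inj_onD[OF bij_betw_imp_inj_on[OF bij], of B B0] B0 \<open>1 \<le> k\<close> by auto
    qed (use B0 in auto)
    then show ?thesis using x by simp
  qed
  have "card ?L = card (SIGMA x:?L. {B \<in> fst x. snd x B = Suc k})"
    using fibres finite_labelled_partitions_on[OF \<open>finite A\<close>] by (simp add: card_SigmaI)
  also have "\<dots> = (\<Sum>B\<in>bounded_blocks m A. card (labelled_partitions_on m (A - B) k r))"
  proof (rule card_marked_blocks)
    show "finite (labelled_partitions_on m (A - B) k r)" for B
      using \<open>finite A\<close> by (simp add: finite_labelled_partitions_on)
    show "(P - {B}, restrict g (P - {B})) \<in> labelled_partitions_on m (A - B) k r"
      if "(P, g) \<in> ?L" "B \<in> P" "g B = Suc k" for P g B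
      using labelled_partitions_on_remove_top that assms by blast
    show "(insert B Q, h(B := Suc k)) \<in> ?L"
      if "B \<in> bounded_blocks m A" "(Q, h) \<in> labelled_partitions_on m (A - B) k r" for B Q h
      using labelled_partitions_on_insert_top that assms by blast
  qed (use \<open>finite A\<close> labelled_partitions_onD in blast)+
  finally show ?thesis .
qed

lemma labelled_partitions_on_1_0:
  assumes "finite A"
  shows "labelled_partitions_on m A 1 0 = (if A = {} then {({}, \<lambda>_. undefined)} else {})"
proof -
  have "(P, g) \<in> labelled_partitions_on m A 1 0 \<longleftrightarrow> A = {} \<and> P = {} \<and> g = (\<lambda>_. undefined)" for P g
  proof
    assume "(P, g) \<in> labelled_partitions_on m A 1 0"
    then have "partition_on A P" "card P = 0" "g \<in> P \<rightarrow>\<^sub>E {1..1}"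
      by (simp_all add: labelled_partitions_on_def)
    moreover have "finite P" using finite_elements[OF assms \<open>partition_on A P\<close>] .
    ultimately show "A = {} \<and> P = {} \<and> g = (\<lambda>_. undefined)"
      by (auto simp: partition_on_def)
  qed (simp add: labelled_partitions_on_def partition_on_empty restrict_def bij_betw_def)
  then show ?thesis by auto
qed

lemma card_labelled_partitions_on_0:
  assumes "finite A"
  shows "card (labelled_partitions_on m A (Suc k) 0) = T_le m (card A) k"
  using assms
proof (induction k arbitrary: A)
  case 0
  then show ?case using labelled_partitions_on_1_0[of A m] by simp
next
  case (Suc k)
  have "card (labelled_partitions_on m A (Suc (Suc k)) 0) =
        (\<Sum>B\<in>bounded_blocks m A. card (labelled_partitions_on m (A - B) (Suc k) 0))"
    using card_labelled_partitions_on_top_rec[where k = "Suc k" and r = 0] Suc.prems by simp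
  also have "\<dots> = (\<Sum>B\<in>bounded_blocks m A. T_le m (card (A - B)) k)"
    using Suc by simp
  also have "\<dots> = T_le m (card A) (Suc k)"
    using sum_bounded_blocks_T_le[OF Suc.prems] .
  finally show ?case .
qed

lemma card_labelled_partitions_on_mult_fact:
  assumes "finite A"
  shows "card (labelled_partitions_on m A (Suc k) r) * fact r = T_le m (card A) (r + k)"
  using assms
proof (induction r arbitrary: A)
  case 0
  then show ?case by (simp add: card_labelled_partitions_on_0)
next
  case (Suc r)
  have "card (labelled_partitions_on m A (Suc k) (Suc r)) * fact (Suc r) =
        (Suc r * card (labelled_partitions_on m A (Suc k) (Suc r))) * fact r"
    by (simp add: algebra_simps)
  also have "\<dots> = (\<Sum>B\<in>bounded_blocks m A. card (labelled_partitions_on m (A - B) (Suc k) r) * fact r)"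
    using card_labelled_partitions_on_unlabelled_rec[OF Suc.prems, where k = "Suc k" and r = r and m = m]
    by (simp only: sum_distrib_right)
  also have "\<dots> = (\<Sum>B\<in>bounded_blocks m A. T_le m (card (A - B)) (r + k))"
    using Suc by simp
  also have "\<dots> = T_le m (card A) (Suc r + k)"
    using sum_bounded_blocks_T_le[OF Suc.prems] by simp
  finally show ?case .
qed

section \<open>The recurrences for \<open>S_le\<close>\<close>

lemma S_le_mult_fact: "S_le m N (Suc k) r * fact r = T_le m N (r + k)"
  using card_labelled_partitions_on_mult_fact[of "{1..N}" m k r]
  by (simp add: S_le_def labelled_partitions_eq_on)

lemma S_le_removal_sum_mult_fact:
  "(S_le m N (Suc k) r + k * S_le m N k (Suc r)) * fact (Suc r) = Suc (r + k) * T_le m N (r + k)"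
proof -
  have "S_le m N (Suc k) r * fact (Suc r) = Suc r * T_le m N (r + k)"
    using S_le_mult_fact[of m N k r] by (simp add: algebra_simps)
  moreover have "k * S_le m N k (Suc r) * fact (Suc r) = k * T_le m N (r + k)"
  proof (cases k)
    case (Suc k')
    have "S_le m N k (Suc r) * fact (Suc r) = T_le m N (r + k)"
      using S_le_mult_fact[of m N k' "Suc r"] unfolding Suc by (simp only: add_Suc add_Suc_right)
    then show ?thesis by (simp only: mult.assoc)
  qed simp
  ultimately show ?thesis
    by (simp add: algebra_simps)
qed

lemma S_le_unlabelled_rec:
  assumes "1 \<le> k" "1 \<le> r"
  shows "r * S_le m n k r =
         (\<Sum>j = 1..min m (n + 2 - k - r). (n choose j) * S_le m (n - j) k (r - 1))"
proof -
  obtain k' r' where rk: "k = Suc k'" "r = Suc r'"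
    using assms by (metis Suc_le_D One_nat_def)
  have "r * S_le m n k r * fact r' = T_le m n (Suc (r' + k'))"
    using S_le_mult_fact[of m n k' r] by (simp add: rk algebra_simps)
  also have "\<dots> = (\<Sum>j = 1..min m (n - (r' + k')). 1 * ((n choose j) * T_le m (n - j) (r' + k')))"
    using sum_choose_T_le_truncate[where f = "\<lambda>_. 1" and b = "r' + k'"] by simp
  also have "\<dots> = (\<Sum>j = 1..min m (n - (r' + k')). (n choose j) * S_le m (n - j) k r') * fact r'"
    using S_le_mult_fact[of m _ k' r'] by (simp add: sum_distrib_right rk mult.assoc)
  finally show ?thesis
    by (simp add: rk add.commute)
qed

lemma S_le_weighted_rec:
  assumes "1 \<le> k" "1 \<le> r"
  shows "n * S_le m n k r =
         (\<Sum>j = 1..min m (n + 2 - k - r). j * (n choose j) *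
            (S_le m (n - j) k (r - 1) + (k - 1) * S_le m (n - j) (k - 1) r))"
proof -
  obtain k' r' where rk: "k = Suc k'" "r = Suc r'"
    using assms by (metis Suc_le_D One_nat_def)
  let ?S = "\<lambda>N. S_le m N (Suc k') r' + k' * S_le m N k' (Suc r')"
  have "n * S_le m n k r * fact r = n * T_le m n (Suc (r' + k'))"
    using S_le_mult_fact[of m n k' r] by (simp add: rk)
  also have "\<dots> = Suc (r' + k') *
      (\<Sum>j = 1..min m (n - (r' + k')). j * ((n choose j) * T_le m (n - j) (r' + k')))"
    by (simp only: T_le_Suc_weighted mult.assoc sum_choose_T_le_truncate)
  also have "\<dots> = (\<Sum>j = 1..min m (n - (r' + k')). j * (n choose j) * ?S (n - j)) * fact r"
    using S_le_removal_sum_mult_fact[of m _ k' r']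
    by (simp add: rk sum_distrib_left sum_distrib_right mult_ac)
  finally show ?thesis
    by (simp add: rk add.commute)
qed

theorem mainTheorem5:
  fixes n k m r :: nat
  assumes "n \<ge> 1" "k \<ge> 1" "m \<ge> 1" "r \<ge> 1"
  shows "(r * S_le m n k r =
           (\<Sum>j = 1..min m (n + 2 - k - r). (n choose j) * S_le m (n - j) k (r - 1))) \<and>
         (n * S_le m n k r =
           (\<Sum>j = 1..min m (n + 2 - k - r). j * (n choose j) *
              (S_le m (n - j) k (r - 1) + (k - 1) * S_le m (n - j) (k - 1) r)))"
  using S_le_unlabelled_rec[OF assms(2,4)] S_le_weighted_rec[OF assms(2,4)] by blast

end
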